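(* Let $u$ be a user, let $I$ be a finite set of items, and let $s_{uq}(\theta)\in\mathbb{R}$ be the model score of item $q\in I$ for $u$ under parameters $\theta$. Rank all items by decreasing score (ties broken arbitrarily), let $r_q$ denote the position of item $q$ in this ranking, and let $R_k(u)$ be the set of the first $k$ items. Let $P(u)\subseteq I$ be a nonempty set of test positive items for $u$. Define $$\phi_u(p;\theta)=\frac{1}{1+\sum_{q\neq p}\exp\!\left(s_{uq}(\theta)-s_{up}(\theta)\right)},$$ $$\mathrm{DCG@k}(u)=\sum_{p\in P(u)\cap R_k(u)}\frac{1}{\log_2(r_p+1)},\qquad Z_k(u)=\mathrm{IDCG@k}(u)=\sum_{i=1}^{\min(k,|P(u)|)}\frac{1}{\log_2(i+1)},$$ and $\mathrm{NDCG@k}(u)=\mathrm{DCG@k}(u)/\mathrm{IDCG@k}(u)$. Then $$\mathrm{NDCG@k}(u)\ \ge\ \frac{1}{Z_k(u)}\sum_{p\in P(u)}\mathbb{I}(r_p\le k)\,\phi_u(p;\theta),$$ where $\mathbb{I}(\cdot)$ is the indicator function.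
   Context: Here $k\ge 1$ is an integer and the sum in $\phi_u$ ranges over all items $q\in I$ other than $p$. *)

theory Defs
  imports Complex_Main
begin

definition is_ranking :: "'a set \<Rightarrow> ('a \<Rightarrow> real) \<Rightarrow> ('a \<Rightarrow> nat) \<Rightarrow> bool" where
  "is_ranking I sc r \<longleftrightarrow> bij_betw r I {1..card I} \<and>
     (\<forall>p\<in>I. \<forall>q\<in>I. sc q > sc p \<longrightarrow> r q < r p)"

definition topk :: "'a set \<Rightarrow> ('a \<Rightarrow> nat) \<Rightarrow> nat \<Rightarrow> 'a set" where
  "topk I r k = {q \<in> I. r q \<le> k}"

definition phi :: "'a set \<Rightarrow> ('a \<Rightarrow> real) \<Rightarrow> 'a \<Rightarrow> real" where
  "phi I sc p = 1 / (1 + (\<Sum>q\<in>I - {p}. exp (sc q - sc p)))"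

definition DCG :: "'a set \<Rightarrow> ('a \<Rightarrow> nat) \<Rightarrow> 'a set \<Rightarrow> nat \<Rightarrow> real" where
  "DCG I r P k = (\<Sum>p\<in>P \<inter> topk I r k. 1 / log 2 (real (r p) + 1))"

definition IDCG :: "'a set \<Rightarrow> nat \<Rightarrow> real" where
  "IDCG P k = (\<Sum>i=1..min k (card P). 1 / log 2 (real i + 1))"

definition NDCG :: "'a set \<Rightarrow> ('a \<Rightarrow> nat) \<Rightarrow> 'a set \<Rightarrow> nat \<Rightarrow> real" where
  "NDCG I r P k = DCG I r P k / IDCG P k"

end

theory Submission
  imports Defs
begin

text \<open>The items ranked strictly before p number r p - 1 and each contributes at least
exp 0 = 1 to the denominator of phi p, so phi p \<le> 1 / r p. Since log2 (n + 1) \<le> n,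
this is at most the DCG gain 1 / log2 (r p + 1) of p. Summing over the relevant items
in the top k gives sum phi \<le> DCG, and dividing by IDCG > 0 yields the bound.\<close>

lemma log2_Suc_le: "log 2 (real n + 1) \<le> real n"
proof -
  have "Suc n \<le> 2 ^ n" by (rule Suc_leI[OF less_exp])
  then have "real (Suc n) \<le> real (2 ^ n)" by (rule of_nat_mono)
  then have "real n + 1 \<le> 2 ^ n" by simp
  then have "log 2 (real n + 1) \<le> log 2 (2 ^ n)" by (intro log_mono) auto
  also have "\<dots> = real n" by (simp add: log_pow_cancel)
  finally show ?thesis .
qed

lemma ranking_pos_ge_1:
  assumes "is_ranking I sc r" and "p \<in> I"
  shows "1 \<le> r p"
  using assms unfolding is_ranking_def bij_betw_def by force

lemma card_ranked_before:
  assumes "is_ranking I sc r" and "p \<in> I"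
  shows "card {q \<in> I. r q < r p} = r p - 1"
proof -
  have bij: "bij_betw r I {1..card I}" using assms(1) unfolding is_ranking_def by blast
  have "r p \<le> card I" using bij assms(2) by (auto dest: bij_betw_apply)
  then have "r ` {q \<in> I. r q < r p} = {1..<r p}"
    using bij unfolding bij_betw_def by (force simp: image_iff)
  moreover have "inj_on r {q \<in> I. r q < r p}"
    using bij unfolding bij_betw_def by (blast intro: inj_on_subset)
  ultimately show ?thesis by (metis card_atLeastLessThan card_image)
qed

lemma phi_le_inverse_rank:
  assumes "finite I" and rk: "is_ranking I sc r" and p: "p \<in> I"
  shows "phi I sc p \<le> 1 / real (r p)"
proof -
  let ?A = "{q \<in> I. r q < r p}"
  have better: "sc p \<le> sc q" if "q \<in> ?A" for q
    using rk p that unfolding is_ranking_def by force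
  have "real (r p) - 1 = (\<Sum>q\<in>?A. 1)"
    using card_ranked_before[OF rk p] ranking_pos_ge_1[OF rk p] by (simp add: of_nat_diff)
  also have "\<dots> \<le> (\<Sum>q\<in>?A. exp (sc q - sc p))"
    using better by (intro sum_mono) auto
  also have "\<dots> \<le> (\<Sum>q\<in>I - {p}. exp (sc q - sc p))"
    using assms(1) by (intro sum_mono2) auto
  finally have "real (r p) \<le> 1 + (\<Sum>q\<in>I - {p}. exp (sc q - sc p))" by simp
  then show ?thesis
    unfolding phi_def using ranking_pos_ge_1[OF rk p] by (intro divide_left_mono) auto
qed

lemma phi_le_DCG_gain:
  assumes "finite I" and "is_ranking I sc r" and "p \<in> I"
  shows "phi I sc p \<le> 1 / log 2 (real (r p) + 1)"
proof -
  have "1 \<le> r p" using ranking_pos_ge_1[OF assms(2,3)] .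
  then have "1 / real (r p) \<le> 1 / log 2 (real (r p) + 1)"
    using log2_Suc_le[of "r p"] by (intro divide_left_mono) auto
  then show ?thesis using phi_le_inverse_rank[OF assms] by linarith
qed

lemma sum_top_phi_le_DCG:
  assumes "finite I" and "is_ranking I sc r" and "P \<subseteq> I"
  shows "(\<Sum>p\<in>P. (if r p \<le> k then 1 else 0) * phi I sc p) \<le> DCG I r P k"
proof -
  have "finite P" using assms(1,3) by (rule rev_finite_subset)
  moreover have "P \<inter> topk I r k = {p \<in> P. r p \<le> k}"
    using assms(3) unfolding topk_def by blast
  ultimately have "(\<Sum>p\<in>P. (if r p \<le> k then 1 else 0) * phi I sc p)
      = (\<Sum>p\<in>P \<inter> topk I r k. phi I sc p)"
    by (simp add: sum.inter_filter) (intro sum.cong, auto)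
  also have "\<dots> \<le> DCG I r P k"
    unfolding DCG_def using assms phi_le_DCG_gain
    by (intro sum_mono) (auto simp: topk_def)
  finally show ?thesis .
qed

lemma IDCG_pos:
  assumes "1 \<le> k" and "1 \<le> card P"
  shows "0 < IDCG P k"
proof -
  have "(\<Sum>i\<in>{1::nat}. 1 / log 2 (real i + 1)) \<le> IDCG P k"
    unfolding IDCG_def using assms by (intro sum_mono2) auto
  then show ?thesis by simp
qed

theorem corollary2:
  fixes I :: "'a set" and P :: "'a set" and u :: 'u and \<theta> :: 'p
    and s :: "'u \<Rightarrow> 'a \<Rightarrow> 'p \<Rightarrow> real" and r :: "'a \<Rightarrow> nat" and k :: nat
  assumes "finite I"
    and "k \<ge> 1"
    and "is_ranking I (\<lambda>q. s u q \<theta>) r"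
    and "P \<subseteq> I" and "P \<noteq> {}"
  shows "NDCG I r P k \<ge>
    (1 / IDCG P k) * (\<Sum>p\<in>P. (if r p \<le> k then 1 else 0) * phi I (\<lambda>q. s u q \<theta>) p)"
proof -
  have "1 \<le> card P"
    using assms(1,4,5) by (metis One_nat_def Suc_leI card_gt_0_iff rev_finite_subset)
  then have "0 < IDCG P k" using assms(2) by (rule IDCG_pos[rotated])
  moreover have "(\<Sum>p\<in>P. (if r p \<le> k then 1 else 0) * phi I (\<lambda>q. s u q \<theta>) p) \<le> DCG I r P k"
    using assms(1,3,4) by (rule sum_top_phi_le_DCG)
  ultimately show ?thesis
    unfolding NDCG_def by (simp add: divide_right_mono)
qed

end
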